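(* Let $O$ be a Hermitian operator on $n$ qubits and, for each parameter vector $\boldsymbol{\theta}$, let $\rho(\boldsymbol{\theta})$ be the noise-free output state with cost $C(\boldsymbol{\theta})=\mathrm{Tr}[\rho(\boldsymbol{\theta})O]$. Suppose the circuit contains $L$ instances of global depolarizing noise with error probability $s$, so that the noisy cost is $\widetilde{C}(\boldsymbol{\theta},s)=\mathrm{Tr}[((1-s)^L\rho(\boldsymbol{\theta})+(1-(1-s)^L)\mathbb{I}/2^n)O]$. Fix a base error probability $p\in[0,1)$ and a boost factor $a_1>1$ with $a_1p\le1$, and consider a Zero Noise Extrapolation estimator with two noise levels of the form $$C_m(\boldsymbol{\theta})=\frac{A\,\widetilde{C}(\boldsymbol{\theta},p)-B\,\widetilde{C}(\boldsymbol{\theta},a_1p)}{D}+E,$$ with real constants $A,B,D,E$ independent of $\boldsymbol{\theta}$, $D\neq0$, whose ratio $c=A/B$ is: $c=a_1$ for Richardson extrapolation; $c=a_1 r(\varepsilon)^{t(\varepsilon)}/r(a_1\varepsilon)^{t(a_1\varepsilon)}$ for exponential extrapolation (with $r,t$ the positive functions of the noise level appearing in the exponential noise model and $\varepsilon$ the base noise level); and $c=a_1^{-(L+1)}$ for NIBP extrapolation. Assume $C_m$ is estimated from independent estimates of $\widetilde{C}(\boldsymbol{\theta},p)$ and $\widetilde{C}(\boldsymbol{\theta},a_1p)$, so that $\mathrm{Var}[C_m(\boldsymbol{\theta})]=(A^2\mathrm{Var}[\widetilde{C}(\boldsymbol{\theta},p)]+B^2\mathrm{Var}[\widetilde{C}(\boldsymbol{\theta},a_1p)])/D^2$,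 and that $\mathrm{Var}[\widetilde{C}(\boldsymbol{\theta},a_1p)]\ge\mathrm{Var}[\widetilde{C}(\boldsymbol{\theta},p)]$ for all $\boldsymbol{\theta}$. For two parameter vectors $\boldsymbol{\theta}_1,\boldsymbol{\theta}_2$ with $C(\boldsymbol{\theta}_1)\ne C(\boldsymbol{\theta}_2)$, let $\chi_{depol}$ be the relative resolvability of these two points. Then $$\chi_{depol}\le\frac{\Big(c-\frac{(1-a_1p)^L}{(1-p)^L}\Big)^2}{c^2+1},$$ and consequently $\chi_{depol}\le1$ for each of the three extrapolation strategies.
   Context: The error mitigation cost is $\gamma=\mathrm{Var}[C_m(\boldsymbol{\theta})]/\mathrm{Var}[\widetilde{C}(\boldsymbol{\theta},p)]$ (evaluated at either point). The relative resolvability of two points is $\chi=\frac{1}{\gamma}\Big(\frac{\Delta C_m}{\Delta\widetilde{C}}\Big)^2$, where $\Delta C_m=C_m(\boldsymbol{\theta}_1)-C_m(\boldsymbol{\theta}_2)$ and $\Delta\widetilde{C}=\widetilde{C}(\boldsymbol{\theta}_1,p)-\widetilde{C}(\boldsymbol{\theta}_2,p)$; it is the ratio of the number of shots needed to resolve the two points to fixed precision without and with mitigation. *)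

theory Defs
  imports Complex_Main "Jordan_Normal_Form.Matrix"
begin

definition mtrace :: "complex mat \<Rightarrow> complex" where
  "mtrace A = (\<Sum>i<dim_row A. A $$ (i, i))"

definition hermitian_on :: "nat \<Rightarrow> complex mat \<Rightarrow> bool" where
  "hermitian_on n Ob \<longleftrightarrow> Ob \<in> carrier_mat (2^n) (2^n) \<and>
     (\<forall>i<2^n. \<forall>j<2^n. Ob $$ (i, j) = cnj (Ob $$ (j, i)))"

definition density_op :: "nat \<Rightarrow> complex mat \<Rightarrow> bool" where
  "density_op n \<rho> \<longleftrightarrow> hermitian_on n \<rho> \<and> mtrace \<rho> = 1 \<and>
     (\<forall>v :: nat \<Rightarrow> complex.
        0 \<le> Re (\<Sum>i<2^n. \<Sum>j<2^n. cnj (v i) * \<rho> $$ (i, j) * v j))"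

text \<open>Cost Tr[rho Ob] (real for Hermitian rho, Ob).\<close>
definition cost :: "complex mat \<Rightarrow> complex mat \<Rightarrow> real" where
  "cost \<rho> Ob = Re (mtrace (\<rho> * Ob))"

definition depol_state :: "nat \<Rightarrow> nat \<Rightarrow> real \<Rightarrow> complex mat \<Rightarrow> complex mat" where
  "depol_state n L s \<rho> =
     complex_of_real ((1 - s) ^ L) \<cdot>\<^sub>m \<rho> +
     complex_of_real ((1 - (1 - s) ^ L) / 2 ^ n) \<cdot>\<^sub>m 1\<^sub>m (2 ^ n)"

definition noisy_cost :: "nat \<Rightarrow> nat \<Rightarrow> real \<Rightarrow> complex mat \<Rightarrow> complex mat \<Rightarrow> real" where
  "noisy_cost n L s \<rho> Ob = cost (depol_state n L s \<rho>) Ob"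

definition mitigation_cost :: "real \<Rightarrow> real \<Rightarrow> real" where
  "mitigation_cost var_mit var_noisy = var_mit / var_noisy"

definition rel_resolvability :: "real \<Rightarrow> real \<Rightarrow> real \<Rightarrow> real" where
  "rel_resolvability \<gamma> dCm dCt = (1 / \<gamma>) * (dCm / dCt)^2"

end

theory Submission
  imports Defs
begin

text \<open>Global depolarizing noise mixes each state with the maximally mixed one, so it shifts every
  noisy cost by the same \<open>\<theta>\<close>-independent constant and damps cost differences by \<open>(1 - s)^L\<close>.
  Writing \<open>q = (1 - a\<^sub>1 p)^L / (1 - p)^L \<in> [0, 1]\<close> and \<open>c = A / B\<close>, the two-level estimator
  amplifies the difference of the noisy costs at level \<open>p\<close> by \<open>B (c - q) / D\<close>, while its variance
  is at least \<open>B\<^sup>2 (c\<^sup>2 + 1) / D\<^sup>2\<close> times the variance at level \<open>p\<close>. Hence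
  \<open>\<chi> \<le> (c - q)\<^sup>2 / (c\<^sup>2 + 1)\<close>, which is at most \<open>1\<close> as soon as \<open>c \<ge> 0\<close>; the ratio \<open>c\<close> is positive
  for Richardson, exponential and NIBP extrapolation alike.\<close>

lemma mtrace_affine_mult:
  assumes "R \<in> carrier_mat N N" "Ob \<in> carrier_mat N N"
  shows "mtrace ((a \<cdot>\<^sub>m R + b \<cdot>\<^sub>m 1\<^sub>m N) * Ob) = a * mtrace (R * Ob) + b * mtrace Ob"
proof -
  have "(a \<cdot>\<^sub>m R + b \<cdot>\<^sub>m 1\<^sub>m N) * Ob = (a \<cdot>\<^sub>m R) * Ob + (b \<cdot>\<^sub>m 1\<^sub>m N) * Ob"
    using assms by (intro add_mult_distrib_mat) auto
  also have "\<dots> = a \<cdot>\<^sub>m (R * Ob) + b \<cdot>\<^sub>m Ob"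
    using assms by (simp add: mult_smult_assoc_mat[of _ N N])
  finally show ?thesis
    using assms unfolding mtrace_def by (simp add: sum.distrib sum_distrib_left)
qed

lemma noisy_cost_eq:
  assumes "R \<in> carrier_mat (2^n) (2^n)" "Ob \<in> carrier_mat (2^n) (2^n)"
  shows "noisy_cost n L s R Ob = (1 - s)^L * cost R Ob + (1 - (1 - s)^L) / 2^n * Re (mtrace Ob)"
  using mtrace_affine_mult[OF assms] unfolding noisy_cost_def depol_state_def cost_def by simp

lemma noisy_cost_diff:
  assumes "R1 \<in> carrier_mat (2^n) (2^n)" "R2 \<in> carrier_mat (2^n) (2^n)"
    and "Ob \<in> carrier_mat (2^n) (2^n)"
  shows "noisy_cost n L s R1 Ob - noisy_cost n L s R2 Ob = (1 - s)^L * (cost R1 Ob - cost R2 Ob)"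
  using noisy_cost_eq[OF assms(1,3)] noisy_cost_eq[OF assms(2,3)] by (simp add: algebra_simps)

lemma damping_ratio_bounds:
  fixes p a :: real
  assumes "0 \<le> p" "p < 1" "1 \<le> a" "a * p \<le> 1"
  shows "0 \<le> (1 - a * p)^L / (1 - p)^L" "(1 - a * p)^L / (1 - p)^L \<le> 1"
proof -
  have "p \<le> a * p" using assms by (simp add: mult_le_cancel_right1)
  then have "(1 - a * p)^L \<le> (1 - p)^L" using assms by (intro power_mono) auto
  then show "(1 - a * p)^L / (1 - p)^L \<le> 1" using assms by simp
  show "0 \<le> (1 - a * p)^L / (1 - p)^L" using assms by simp
qed

lemma rel_resolvability_two_level_eq:
  fixes A B D V W u v X :: real
  assumes "B \<noteq> 0" "D \<noteq> 0" "u \<noteq> 0" "X \<noteq> 0"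
  shows "rel_resolvability (mitigation_cost ((A^2 * V + B^2 * W) / D^2) V)
           ((A * (u * X) - B * (v * X)) / D) (u * X)
         = V * (A / B - v / u)^2 / ((A / B)^2 * V + W)"
proof -
  have "(A * (u * X) - B * (v * X)) / D / (u * X) = B * (A / B - v / u) / D"
    using assms by (simp add: field_simps)
  moreover have "A^2 * V + B^2 * W = B^2 * ((A / B)^2 * V + W)"
    using assms by (simp add: field_simps)
  ultimately show ?thesis
    using assms unfolding rel_resolvability_def mitigation_cost_def
    by (simp add: power_mult_distrib power_divide)
qed

lemma two_level_ratio_le:
  fixes c q V W :: real
  assumes "0 < V" "V \<le> W"
  shows "V * (c - q)^2 / (c^2 * V + W) \<le> (c - q)^2 / (c^2 + 1)"
proof -
  have "V * (c - q)^2 / (c^2 * V + W) \<le> V * (c - q)^2 / (c^2 * V + V)"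
    using assms by (intro divide_left_mono mult_pos_pos add_nonneg_pos) auto
  also have "\<dots> = V * (c - q)^2 / (V * (c^2 + 1))"
    by (simp add: algebra_simps)
  also have "\<dots> = (c - q)^2 / (c^2 + 1)"
    using assms by simp
  finally show ?thesis .
qed

lemma shifted_ratio_le_one:
  fixes c q :: real
  assumes "0 \<le> c" "0 \<le> q" "q \<le> 1"
  shows "(c - q)^2 / (c^2 + 1) \<le> 1"
proof -
  have "q * q \<le> 1" using assms by (simp add: mult_le_one)
  then have "(c - q)^2 \<le> c^2 + 1"
    using assms by (simp add: power2_eq_square algebra_simps) (smt (verit) mult_nonneg_nonneg)
  then show ?thesis by (simp add: add_nonneg_pos)
qed

lemma extrapolation_ratio_pos:
  fixes a c :: real
  assumes "0 < a"
    and "c = a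
         \<or> (\<exists>(r :: real \<Rightarrow> real) (t :: real \<Rightarrow> real) (\<epsilon> :: real).
              (\<forall>x. r x > 0 \<and> t x > 0) \<and> c = a * r \<epsilon> powr t \<epsilon> / r (a * \<epsilon>) powr t (a * \<epsilon>))
         \<or> c = inverse (a ^ (L + 1))"
  shows "0 < c"
  using assms(2)
proof (elim disjE exE conjE)
  fix r t :: "real \<Rightarrow> real" and \<epsilon> :: real
  assume "\<forall>x. r x > 0 \<and> t x > 0" and c: "c = a * r \<epsilon> powr t \<epsilon> / r (a * \<epsilon>) powr t (a * \<epsilon>)"
  then have "r \<epsilon> > 0" "r (a * \<epsilon>) > 0" by auto
  then show "0 < c" unfolding c using assms(1) by (simp add: powr_gt_zero)
qed (use assms(1) in auto)

theorem proposition1: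
  fixes n L :: nat
    and Ob :: "complex mat"
    and \<rho> :: "'p \<Rightarrow> complex mat"
    and p a1 A B D E c :: real
    and Var_noisy :: "'p \<Rightarrow> real \<Rightarrow> real"
    and Var_mit :: "'p \<Rightarrow> real"
    and \<theta>1 \<theta>2 :: 'p
  defines "Cm \<equiv> (\<lambda>\<theta>. (A * noisy_cost n L p (\<rho> \<theta>) Ob
                      - B * noisy_cost n L (a1 * p) (\<rho> \<theta>) Ob) / D + E)"
  assumes O_herm: "hermitian_on n Ob"
    and states: "\<And>\<theta>. density_op n (\<rho> \<theta>)"
    and p_range: "0 \<le> p" "p < 1"
    and a1: "a1 > 1" "a1 * p \<le> 1"
    and D_nz: "D \<noteq> 0"
    and B_nz: "B \<noteq> 0"
    and c_def: "c = A / B"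
    and var_pos: "\<And>\<theta>. Var_noisy \<theta> p > 0"
    and var_mit: "\<And>\<theta>. Var_mit \<theta> =
                     (A^2 * Var_noisy \<theta> p + B^2 * Var_noisy \<theta> (a1 * p)) / D^2"
    and var_mono: "\<And>\<theta>. Var_noisy \<theta> (a1 * p) \<ge> Var_noisy \<theta> p"
    and distinct: "cost (\<rho> \<theta>1) Ob \<noteq> cost (\<rho> \<theta>2) Ob"
  shows "\<forall>\<theta>\<in>{\<theta>1, \<theta>2}.
           (let \<chi> = rel_resolvability (mitigation_cost (Var_mit \<theta>) (Var_noisy \<theta> p))
                       (Cm \<theta>1 - Cm \<theta>2)
                       (noisy_cost n L p (\<rho> \<theta>1) Ob - noisy_cost n L p (\<rho> \<theta>2) Ob)
            in \<chi> \<le> (c - (1 - a1 * p) ^ L / (1 - p) ^ L)^2 / (c^2 + 1)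
               \<and> ((c = a1
                   \<or> (\<exists>(r :: real \<Rightarrow> real) (t :: real \<Rightarrow> real) (\<epsilon> :: real).
                         (\<forall>x. r x > 0 \<and> t x > 0) \<and>
                         c = a1 * r \<epsilon> powr t \<epsilon> / r (a1 * \<epsilon>) powr t (a1 * \<epsilon>))
                   \<or> c = inverse (a1 ^ (L + 1)))
                  \<longrightarrow> \<chi> \<le> 1))"
proof -
  define X where "X = cost (\<rho> \<theta>1) Ob - cost (\<rho> \<theta>2) Ob"
  define u where "u = (1 - p)^L"
  define v where "v = (1 - a1 * p)^L"
  define \<chi> where "\<chi> \<theta> = rel_resolvability (mitigation_cost (Var_mit \<theta>) (Var_noisy \<theta> p))
    (Cm \<theta>1 - Cm \<theta>2) (u * X)" for \<theta>
  have carrier: "Ob \<in> carrier_mat (2^n) (2^n)" "\<And>\<theta>. \<rho> \<theta> \<in> carrier_mat (2^n) (2^n)"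
    using O_herm states unfolding density_op_def hermitian_on_def by auto
  have dC_p: "noisy_cost n L p (\<rho> \<theta>1) Ob - noisy_cost n L p (\<rho> \<theta>2) Ob = u * X"
    and dC_a1p: "noisy_cost n L (a1 * p) (\<rho> \<theta>1) Ob - noisy_cost n L (a1 * p) (\<rho> \<theta>2) Ob = v * X"
    using noisy_cost_diff carrier unfolding u_def v_def X_def by auto
  have dCm: "Cm \<theta>1 - Cm \<theta>2 = (A * (u * X) - B * (v * X)) / D"
    unfolding Cm_def dC_p[symmetric] dC_a1p[symmetric] using D_nz by (simp add: field_simps)
  have bound: "\<chi> \<theta> \<le> (c - v / u)^2 / (c^2 + 1)" for \<theta>
  proof -
    have "\<chi> \<theta> = Var_noisy \<theta> p * (c - v / u)^2 / (c^2 * Var_noisy \<theta> p + Var_noisy \<theta> (a1 * p))"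
      using rel_resolvability_two_level_eq B_nz D_nz distinct p_range
      unfolding \<chi>_def dCm var_mit c_def u_def X_def by simp
    also have "\<dots> \<le> (c - v / u)^2 / (c^2 + 1)"
      using two_level_ratio_le var_pos var_mono .
    finally show ?thesis .
  qed
  have "0 \<le> v / u" "v / u \<le> 1"
    using damping_ratio_bounds[of p a1 L] p_range a1 unfolding u_def v_def by auto
  then have le_one: "\<chi> \<theta> \<le> 1" if "0 < c" for \<theta>
    using that by (intro order_trans[OF bound] shifted_ratio_le_one) auto
  have a1_pos: "0 < a1" using a1 by simp
  show ?thesis
    unfolding Let_def dC_p u_def[symmetric] v_def[symmetric] \<chi>_def[symmetric]
    by (intro ballI conjI impI bound le_one extrapolation_ratio_pos[OF a1_pos])
qed

end
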